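(* Let $K\hat N^\infty_*=\bigoplus_{n\ge1}K\hat N^n$ and define the bilinear product $\vec v\star\vec w=\sum_{\vec t}\vec t$, the sum over all $\vec t\in\hat N^{n+m}$ with $\vec v\nearrow\vec w\le\vec t\le\vec v\nwarrow\vec w$ (componentwise), for $\vec v\in\hat N^n,\vec w\in\hat N^m$, $n,m\ge1$. Then $\star$ is associative, and for all $\vec u\in\hat N^p,\vec v\in\hat N^n,\vec w\in\hat N^m$, $\vec u\star\vec v\star\vec w=\sum_{\vec t}\vec t$ over all $\vec t\in\hat N^{p+n+m}$ with $\vec u\nearrow\vec v\nearrow\vec w\le\vec t\le\vec u\nwarrow\vec v\nwarrow\vec w$. Moreover, extending by $\vec v\star()=\vec v=()\star\vec v$ with $()$ the empty vector, $()$ is a unit.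
   Context: $K$ is a field of characteristic zero. $\hat N^n$ ($n\ge1$) is the set of names of planar rooted binary trees with $n$ internal vertices: writing a tree as a complete expression (full binary parenthesization, outermost product included) of $x_1\cdots x_{n+1}$, its name $\vec v\in\mathbb N^n$ has $v_i=i$ if at least one left parenthesis stands immediately left of $x_i$, and otherwise $v_i=j$ where the rightmost of the right parentheses immediately following $x_i$ matches a left parenthesis in the run immediately preceding $x_j$. $\hat N^0=\{()\}$. For $\vec v\in\hat N^n,\vec w\in\hat N^m$: $\vec v\nearrow\vec w=(\vec v,n\triangleright w_1,\dots,n\triangleright w_m)$ with $n\triangleright a=a+n$ for $a\ne1$ and $n\triangleright1=1$; $\vec v\nwarrow\vec w=(v_1,\dots,v_n,w_1+n,\dots,w_m+n)$. Both are associative. Componentwise order: $\vec v\le\vec w$ iff $v_i\le w_i$ for all $i$. *)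

theory Defs
  imports Main
begin

text \<open>Planar rooted binary trees; leaves are the variables x_1,...,x_(n+1).\<close>
datatype ptree = Leaf | Node ptree ptree

fun internal :: "ptree \<Rightarrow> nat" where
  "internal Leaf = 0"
| "internal (Node l r) = internal l + internal r + 1"

definition leaves :: "ptree \<Rightarrow> nat" where
  "leaves t = internal t + 1"

text \<open>Each internal vertex contributes one pair of matching parentheses in the complete
  expression: its left parenthesis stands (in the run) immediately before x_a and its
  right parenthesis (in the run) immediately after x_b, where a..b are the leaves below it.
  spans k t lists these pairs (a,b), the leaves of t being numbered from k.\<close>
fun spans :: "nat \<Rightarrow> ptree \<Rightarrow> (nat \<times> nat) set" where
  "spans k Leaf = {}"
| "spans k (Node l r) =
     insert (k, k + leaves (Node l r) - 1) (spans k l \<union> spans (k + leaves l) r)"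

text \<open>Name of a tree: v_i = i if some left parenthesis stands immediately left of x_i;
  otherwise the rightmost right parenthesis after x_i belongs to the outermost vertex (a,i),
  i.e. the one with the smallest a, whose left parenthesis stands before x_a, so v_i = a.\<close>
definition tree_name :: "ptree \<Rightarrow> nat list" where
  "tree_name t = map (\<lambda>i. if (\<exists>b. (i, b) \<in> spans 1 t) then i
                           else Min {a. (a, i) \<in> spans 1 t}) [1..<internal t + 1]"

definition Nhat :: "nat \<Rightarrow> nat list set" where
  "Nhat n = {tree_name t | t. internal t = n}"

definition tri :: "nat \<Rightarrow> nat \<Rightarrow> nat" where
  "tri n a = (if a = 1 then 1 else a + n)"

definition nearrow :: "nat list \<Rightarrow> nat list \<Rightarrow> nat list" where
  "nearrow v w = v @ map (tri (length v)) w"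

definition nwarrow :: "nat list \<Rightarrow> nat list \<Rightarrow> nat list" where
  "nwarrow v w = v @ map (\<lambda>a. a + length v) w"

definition cle :: "nat list \<Rightarrow> nat list \<Rightarrow> bool" where
  "cle v w = list_all2 (\<le>) v w"

text \<open>Elements of the vector space: finitely supported K-valued functions on names.\<close>
definition in_span :: "nat set \<Rightarrow> (nat list \<Rightarrow> 'k::zero) \<Rightarrow> bool" where
  "in_span D f = (finite {x. f x \<noteq> 0} \<and> (\<forall>x. f x \<noteq> 0 \<longrightarrow> x \<in> (\<Union>n\<in>D. Nhat n)))"

definition basis :: "nat list \<Rightarrow> nat list \<Rightarrow> 'k::{zero,one}" where
  "basis v = (\<lambda>t. if t = v then 1 else 0)"

definition starB :: "nat list \<Rightarrow> nat list \<Rightarrow> nat list \<Rightarrow> 'k::{zero,one}" where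
  "starB v w = (if v = [] then basis w else if w = [] then basis v else
      (\<lambda>t. if t \<in> Nhat (length v + length w) \<and> cle (nearrow v w) t \<and> cle t (nwarrow v w)
           then 1 else 0))"

definition star :: "(nat list \<Rightarrow> 'k::comm_ring_1) \<Rightarrow> (nat list \<Rightarrow> 'k) \<Rightarrow> nat list \<Rightarrow> 'k" where
  "star f g = (\<lambda>t. \<Sum>v\<in>{v. f v \<noteq> 0}. \<Sum>w\<in>{w. g w \<noteq> 0}. f v * g w * starB v w t)"

end

theory Submission
  imports Defs
begin

(* A name is computed recursively: the name of Node l r is the name of l, then 1, then the name
   of r with all entries shifted by internal l + 1. Hence the prefix of length k of a name in
   Nhat (k + m) lies in Nhat k, and the suffix after position p, renormalised by untri p (the
   inverse of tri p), lies in Nhat m as well.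

   For names u, v, w the coefficient of t in (u star v) star w counts the names y with
   u nearrow v <= y <= u nwarrow v and y nearrow w <= t <= y nwarrow w. Comparing the
   first |u| + |v| entries forces y to be the prefix of t, and such a y exists iff t lies in the
   triple interval. Dually, in u star (v star w) the middle name must be the renormalised suffix
   of t. Both bracketings therefore give the indicator of the triple interval, and associativity
   on finitely supported vectors follows by bilinearity. *)

section \<open>Names of trees\<close>

fun name_rec :: "ptree \<Rightarrow> nat list" where
  "name_rec Leaf = []"
| "name_rec (Node l r) = name_rec l @ 1 # map (\<lambda>x. x + (internal l + 1)) (name_rec r)"

definition name_entry :: "nat \<Rightarrow> ptree \<Rightarrow> nat \<Rightarrow> nat" where
  "name_entry k t i = (if \<exists>b. (i, b) \<in> spans k t then i else Min {a. (a, i) \<in> spans k t})"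

lemma spans_Node_internal [simp]:
  "spans k (Node l r) =
     insert (k, k + internal l + internal r + 1) (spans k l \<union> spans (k + internal l + 1) r)"
  by (simp add: leaves_def add.assoc)

declare spans.simps(2)[simp del]

lemma internal_eq_0_iff: "internal t = 0 \<longleftrightarrow> t = Leaf"
  by (cases t) auto

lemma spans_bounds: "(a, b) \<in> spans k t \<Longrightarrow> k \<le> a \<and> a < b \<and> b \<le> k + internal t"
  by (induction t arbitrary: k) (auto, fastforce+)

lemma spans_root: "t \<noteq> Leaf \<Longrightarrow> (k, k + internal t) \<in> spans k t"
  by (cases t) auto

lemma finite_spans: "finite (spans k t)"
  by (induction t arbitrary: k) auto

lemma name_entry_Node_left:
  assumes "k \<le> i" "i < k + internal l"
  shows "name_entry k (Node l r) i = name_entry k l i"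
proof -
  have "l \<noteq> Leaf" using assms by auto
  then have "(\<exists>b. (i, b) \<in> spans k (Node l r)) \<longleftrightarrow> (\<exists>b. (i, b) \<in> spans k l)"
    using assms spans_root[of l k] spans_bounds[of i _ "k + internal l + 1" r]
    by auto
  moreover have "{a. (a, i) \<in> spans k (Node l r)} = {a. (a, i) \<in> spans k l}"
    using assms spans_bounds[of _ i "k + internal l + 1" r] by fastforce
  ultimately show ?thesis by (simp add: name_entry_def)
qed

lemma name_entry_Node_root: "name_entry k (Node l r) (k + internal l) = k"
proof (cases "l = Leaf")
  case True
  then show ?thesis by (auto simp: name_entry_def)
next
  case False
  let ?S = "spans k (Node l r)"
  have "\<not> (\<exists>b. (k + internal l, b) \<in> ?S)"
    using False spans_bounds[of "k + internal l" _ k l]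
      spans_bounds[of "k + internal l" _ "k + internal l + 1" r]
    by (fastforce simp: internal_eq_0_iff)
  moreover have "Min {a. (a, k + internal l) \<in> ?S} = k"
  proof (rule Min_eqI)
    show "finite {a. (a, k + internal l) \<in> ?S}"
      using finite_spans[of k "Node l r"] by (rule finite_surj[where f = fst]) force
    show "k \<in> {a. (a, k + internal l) \<in> ?S}"
      using spans_root[OF False, of k] by simp
    show "k \<le> a" if "a \<in> {a. (a, k + internal l) \<in> ?S}" for a
      using that spans_bounds[of a _ k l] spans_bounds[of a _ "k + internal l + 1" r] by fastforce
  qed
  ultimately show ?thesis by (simp add: name_entry_def)
qed

lemma name_entry_Node_right:
  assumes "k + internal l + 1 \<le> i" "i < k + internal (Node l r)"
  shows "name_entry k (Node l r) i = name_entry (k + internal l + 1) r i"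
proof -
  have "(\<exists>b. (i, b) \<in> spans k (Node l r)) \<longleftrightarrow> (\<exists>b. (i, b) \<in> spans (k + internal l + 1) r)"
    using assms spans_bounds[of i _ k l] by fastforce
  moreover have "{a. (a, i) \<in> spans k (Node l r)} = {a. (a, i) \<in> spans (k + internal l + 1) r}"
    using assms spans_bounds[of _ i k l] by auto
  ultimately show ?thesis by (simp add: name_entry_def)
qed

lemma map_name_entry:
  "map (name_entry (Suc j) t) [Suc j..<Suc j + internal t] = map (\<lambda>x. x + j) (name_rec t)"
proof (induction t arbitrary: j)
  case Leaf
  then show ?case by simp
next
  case (Node l r)
  define k where "k = Suc j"
  let ?a = "internal l" and ?b = "internal r"
  have upt: "[k..<k + internal (Node l r)] = [k..<k + ?a] @ (k + ?a) # [k + ?a + 1..<k + ?a + 1 + ?b]"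
    using upt_add_eq_append[of k "k + ?a" "1 + ?b"] by (simp add: upt_rec add.assoc)
  have "map (name_entry k (Node l r)) [k..<k + ?a] = map (name_entry k l) [k..<k + ?a]"
    by (intro map_cong refl name_entry_Node_left) auto
  also have "\<dots> = map (\<lambda>x. x + j) (name_rec l)"
    unfolding k_def by (rule Node.IH(1))
  finally have left: "map (name_entry k (Node l r)) [k..<k + ?a] = map (\<lambda>x. x + j) (name_rec l)" .
  have "map (name_entry k (Node l r)) [k + ?a + 1..<k + ?a + 1 + ?b]
      = map (name_entry (Suc (j + ?a + 1)) r) [Suc (j + ?a + 1)..<Suc (j + ?a + 1) + ?b]"
    by (intro map_cong) (auto simp: k_def name_entry_Node_right)
  also have "\<dots> = map (\<lambda>x. x + (j + ?a + 1)) (name_rec r)"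
    by (rule Node.IH(2))
  finally have right: "map (name_entry k (Node l r)) [k + ?a + 1..<k + ?a + 1 + ?b]
      = map (\<lambda>x. x + (j + ?a + 1)) (name_rec r)" .
  show ?case
    unfolding k_def[symmetric] upt using left right name_entry_Node_root[of k l r]
    by (simp add: k_def add.assoc)
qed

lemma tree_name_eq_name_rec: "tree_name t = name_rec t"
proof -
  have "tree_name t = map (name_entry (Suc 0) t) [Suc 0..<Suc 0 + internal t]"
    by (simp add: tree_name_def name_entry_def[abs_def])
  then show ?thesis
    using map_name_entry[of 0 t] by simp
qed

lemma length_name_rec: "length (name_rec t) = internal t"
  by (induction t) auto

lemma set_name_rec: "set (name_rec t) \<subseteq> {1..internal t}"
  by (induction t) auto

lemma take_name_rec:
  "k \<le> internal t \<Longrightarrow> \<exists>t'. internal t' = k \<and> name_rec t' = take k (name_rec t)"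
proof (induction t arbitrary: k)
  case Leaf
  then show ?case by (intro exI[of _ Leaf]) simp
next
  case (Node l r)
  show ?case
  proof (cases "k \<le> internal l")
    case True
    then obtain l' where "internal l' = k" "name_rec l' = take k (name_rec l)"
      using Node.IH(1) by blast
    then show ?thesis using True by (auto simp: length_name_rec)
  next
    case False
    define j where "j = k - (internal l + 1)"
    have j: "k = internal l + 1 + j"
      using False by (simp add: j_def)
    then obtain r' where "internal r' = j" "name_rec r' = take j (name_rec r)"
      using Node.IH(2) Node.prems by fastforce
    then show ?thesis
      using j by (intro exI[of _ "Node l r'"]) (simp add: length_name_rec take_map)
  qed
qed

(* inverts tri p on positive numbers *)
definition untri :: "nat \<Rightarrow> nat \<Rightarrow> nat" where
  "untri p a = (if a \<le> p + 1 then 1 else a - p)"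

lemma drop_name_rec:
  "p \<le> internal t \<Longrightarrow>
     \<exists>t'. internal t' = internal t - p \<and> name_rec t' = map (untri p) (drop p (name_rec t))"
proof (induction t arbitrary: p)
  case Leaf
  then show ?case by (intro exI[of _ Leaf]) simp
next
  case (Node l r)
  show ?case
  proof (cases "p \<le> internal l")
    case True
    then obtain l' where l': "internal l' = internal l - p"
        "name_rec l' = map (untri p) (drop p (name_rec l))"
      using Node.IH(1) by blast
    have shift: "map (untri p \<circ> (\<lambda>x. x + (internal l + 1))) (name_rec r)
        = map (\<lambda>x. x + (internal l' + 1)) (name_rec r)"
      using set_name_rec[of r] True l'(1) by (intro map_cong refl) (auto simp: untri_def)
    have "map (untri p) (drop p (name_rec (Node l r))) = name_rec (Node l' r)"
      using True l' shift by (simp add: length_name_rec untri_def[of p "Suc 0"])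
    then show ?thesis
      using True l'(1) by (intro exI[of _ "Node l' r"]) simp
  next
    case False
    define q where "q = p - (internal l + 1)"
    have q: "p = internal l + 1 + q"
      using False by (simp add: q_def)
    then obtain r' where r': "internal r' = internal r - q"
        "name_rec r' = map (untri q) (drop q (name_rec r))"
      using Node.IH(2) Node.prems by fastforce
    have "untri p (x + (internal l + 1)) = untri q x" for x
      using q by (simp add: untri_def)
    then show ?thesis
      using q r' by (intro exI[of _ r']) (simp add: length_name_rec drop_map)
  qed
qed

lemma Nhat_conv_name_rec: "Nhat n = {name_rec t | t. internal t = n}"
  by (simp add: Nhat_def tree_name_eq_name_rec)

lemma length_Nhat: "s \<in> Nhat n \<Longrightarrow> length s = n"
  by (auto simp: Nhat_conv_name_rec length_name_rec)

lemma set_Nhat: "s \<in> Nhat n \<Longrightarrow> set s \<subseteq> {1..n}"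
  using set_name_rec by (auto simp: Nhat_conv_name_rec)

lemma Nhat_pos: "s \<in> Nhat n \<Longrightarrow> \<forall>a\<in>set s. 1 \<le> a"
  using set_Nhat by fastforce

lemma finite_Nhat: "finite (Nhat n)"
proof (rule finite_subset)
  show "Nhat n \<subseteq> {s. set s \<subseteq> {0..n} \<and> length s = n}"
    using set_Nhat length_Nhat by fastforce
qed (simp add: finite_lists_length_eq)

lemma take_Nhat: "s \<in> Nhat (k + m) \<Longrightarrow> take k s \<in> Nhat k"
proof -
  assume "s \<in> Nhat (k + m)"
  then obtain t where "internal t = k + m" "s = name_rec t"
    by (auto simp: Nhat_conv_name_rec)
  then obtain t' where "internal t' = k" "name_rec t' = take k s"
    using take_name_rec[of k t] by auto
  then show ?thesis
    unfolding Nhat_conv_name_rec by (metis (mono_tags, lifting) mem_Collect_eq)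
qed

lemma untri_drop_Nhat: "s \<in> Nhat (p + k) \<Longrightarrow> map (untri p) (drop p s) \<in> Nhat k"
proof -
  assume "s \<in> Nhat (p + k)"
  then obtain t where "internal t = p + k" "s = name_rec t"
    by (auto simp: Nhat_conv_name_rec)
  then obtain t' where "internal t' = k" "name_rec t' = map (untri p) (drop p s)"
    using drop_name_rec[of p t] by auto
  then show ?thesis
    unfolding Nhat_conv_name_rec by (metis (mono_tags, lifting) mem_Collect_eq)
qed

section \<open>The componentwise order\<close>

lemma cle_conv_nth: "cle a b \<longleftrightarrow> length a = length b \<and> (\<forall>i<length a. a ! i \<le> b ! i)"
  by (simp add: cle_def list_all2_conv_all_nth)

lemma cle_length: "cle a b \<Longrightarrow> length a = length b"
  by (simp add: cle_conv_nth)

lemma cle_refl: "cle a a"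
  by (simp add: cle_def list_all2_refl)

lemma cle_antisym: "cle a b \<Longrightarrow> cle b a \<Longrightarrow> a = b"
  unfolding cle_conv_nth by (metis nth_equalityI le_antisym)

lemma cle_append_left: "cle (a @ b) t \<longleftrightarrow> cle a (take (length a) t) \<and> cle b (drop (length a) t)"
proof
  assume "cle (a @ b) t"
  then show "cle a (take (length a) t) \<and> cle b (drop (length a) t)"
    unfolding cle_def using list_all2_takeI[of _ "a @ b" t "length a"]
      list_all2_dropI[of _ "a @ b" t "length a"] by simp
next
  assume "cle a (take (length a) t) \<and> cle b (drop (length a) t)"
  then have "list_all2 (\<le>) (a @ b) (take (length a) t @ drop (length a) t)"
    unfolding cle_def by (intro list_all2_appendI) auto
  then show "cle (a @ b) t"
    by (simp add: cle_def)
qed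

lemma cle_append_right: "cle t (c @ d) \<longleftrightarrow> cle (take (length c) t) c \<and> cle (drop (length c) t) d"
proof
  assume "cle t (c @ d)"
  then show "cle (take (length c) t) c \<and> cle (drop (length c) t) d"
    unfolding cle_def using list_all2_takeI[of _ t "c @ d" "length c"]
      list_all2_dropI[of _ t "c @ d" "length c"] by (simp add: list_all2_lengthD)
next
  assume "cle (take (length c) t) c \<and> cle (drop (length c) t) d"
  then have "list_all2 (\<le>) (take (length c) t @ drop (length c) t) (c @ d)"
    unfolding cle_def by (intro list_all2_appendI) auto
  then show "cle t (c @ d)"
    by (simp add: cle_def)
qed

lemma cle_append_same:
  "cle (v @ b) t \<and> cle t (v @ d) \<longleftrightarrow>
    take (length v) t = v \<and> cle b (drop (length v) t) \<and> cle (drop (length v) t) d"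
  unfolding cle_append_left cle_append_right by (auto intro: cle_antisym simp: cle_refl)

lemma tri_untri_bounds:
  assumes "1 \<le> a" "1 \<le> b"
  shows "tri p y \<le> d \<and> d \<le> y + p \<and> a \<le> y \<and> y \<le> b \<and> 1 \<le> y \<longleftrightarrow>
    tri p a \<le> d \<and> d \<le> b + p \<and> y = untri p d"
proof
  assume "tri p y \<le> d \<and> d \<le> y + p \<and> a \<le> y \<and> y \<le> b \<and> 1 \<le> y"
  then show "tri p a \<le> d \<and> d \<le> b + p \<and> y = untri p d"
    using assms by (cases "y = 1"; cases "a = 1") (auto simp: tri_def untri_def)
next
  assume "tri p a \<le> d \<and> d \<le> b + p \<and> y = untri p d"
  then show "tri p y \<le> d \<and> d \<le> y + p \<and> a \<le> y \<and> y \<le> b \<and> 1 \<le> y"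
    using assms by (cases "d \<le> p + 1"; cases "a = 1") (auto simp: tri_def untri_def)
qed

lemma cle_tri_untri_iff:
  assumes A: "\<forall>a\<in>set A. 1 \<le> a" and B: "\<forall>b\<in>set B. 1 \<le> b" and len: "length A = length B"
  shows "cle (map (tri p) y) d \<and> cle d (map (\<lambda>a. a + p) y) \<and> cle A y \<and> cle y B \<and>
      (\<forall>a\<in>set y. 1 \<le> a) \<longleftrightarrow>
    cle (map (tri p) A) d \<and> cle d (map (\<lambda>b. b + p) B) \<and> y = map (untri p) d"
    (is "?lhs \<longleftrightarrow> ?rhs")
proof (cases "length y = length d \<and> length A = length d")
  case True
  then have "?lhs \<longleftrightarrow> (\<forall>i<length d. tri p (y ! i) \<le> d ! i \<and> d ! i \<le> y ! i + p \<and>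
      A ! i \<le> y ! i \<and> y ! i \<le> B ! i \<and> 1 \<le> y ! i)"
    using len by (simp add: cle_conv_nth all_set_conv_all_nth) blast
  also have "\<dots> \<longleftrightarrow> (\<forall>i<length d. tri p (A ! i) \<le> d ! i \<and> d ! i \<le> B ! i + p \<and>
      y ! i = untri p (d ! i))"
  proof (intro all_cong1 imp_cong refl)
    fix i assume "i < length d"
    then show "tri p (y ! i) \<le> d ! i \<and> d ! i \<le> y ! i + p \<and> A ! i \<le> y ! i \<and> y ! i \<le> B ! i
        \<and> 1 \<le> y ! i \<longleftrightarrow> tri p (A ! i) \<le> d ! i \<and> d ! i \<le> B ! i + p \<and> y ! i = untri p (d ! i)"
      using True len A B by (intro tri_untri_bounds) simp_all
  qed
  also have "\<dots> \<longleftrightarrow> ?rhs"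
    using True len by (simp add: cle_conv_nth list_eq_iff_nth_eq) blast
  finally show ?thesis .
next
  case False
  then show ?thesis
    by (metis cle_length length_map)
qed

section \<open>Intervals of products of names\<close>

definition interval2 :: "nat list \<Rightarrow> nat list \<Rightarrow> nat list \<Rightarrow> bool" where
  "interval2 v w t \<longleftrightarrow>
     t \<in> Nhat (length v + length w) \<and> cle (nearrow v w) t \<and> cle t (nwarrow v w)"

definition interval3 :: "nat list \<Rightarrow> nat list \<Rightarrow> nat list \<Rightarrow> nat list \<Rightarrow> bool" where
  "interval3 u v w t \<longleftrightarrow> t \<in> Nhat (length u + length v + length w) \<and>
     cle (nearrow (nearrow u v) w) t \<and> cle t (nwarrow (nwarrow u v) w)"

lemma interval2_iff:
  "interval2 v y t \<longleftrightarrow> t \<in> Nhat (length v + length y) \<and> take (length v) t = v \<and>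
     cle (map (tri (length v)) y) (drop (length v) t) \<and>
     cle (drop (length v) t) (map (\<lambda>a. a + length v) y)"
  by (auto simp: interval2_def nearrow_def nwarrow_def cle_append_same)

lemma tri_tri: "1 \<le> a \<Longrightarrow> tri p (tri n a) = tri (p + n) a"
  by (simp add: tri_def)

lemma nearrow_nearrow:
  assumes "\<forall>a\<in>set x. 1 \<le> a"
  shows "nearrow (nearrow v w) x = v @ map (tri (length v)) (nearrow w x)"
proof -
  have "map (tri (length v + length w)) x = map (tri (length v) \<circ> tri (length w)) x"
    using assms by (intro map_cong refl) (simp add: tri_tri)
  then show ?thesis
    by (simp add: nearrow_def)
qed

lemma nwarrow_nwarrow: "nwarrow (nwarrow v w) x = v @ map (\<lambda>a. a + length v) (nwarrow w x)"
  by (simp add: nwarrow_def add.commute add.left_commute)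

lemma nearrow_pos: "\<forall>a\<in>set w. 1 \<le> a \<Longrightarrow> \<forall>a\<in>set x. 1 \<le> a \<Longrightarrow> \<forall>a\<in>set (nearrow w x). 1 \<le> a"
  unfolding nearrow_def tri_def by auto

lemma nwarrow_pos: "\<forall>a\<in>set w. 1 \<le> a \<Longrightarrow> \<forall>a\<in>set x. 1 \<le> a \<Longrightarrow> \<forall>a\<in>set (nwarrow w x). 1 \<le> a"
  unfolding nwarrow_def by auto

lemma interval2_interval2_left:
  "interval2 v w y \<and> interval2 y x t \<longleftrightarrow> interval3 v w x t \<and> y = take (length v + length w) t"
proof -
  define L where "L = length v + length w"
  have "length (nearrow v w) = L" "length (nwarrow v w) = L"
    by (simp_all add: L_def nearrow_def nwarrow_def)
  then have I3: "interval3 v w x t \<longleftrightarrow> t \<in> Nhat (L + length x) \<and>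
      cle (nearrow v w) (take L t) \<and> cle (take L t) (nwarrow v w) \<and>
      cle (map (tri L) x) (drop L t) \<and> cle (drop L t) (map (\<lambda>a. a + L) x)"
    unfolding interval3_def nearrow_def[of "nearrow v w"] nwarrow_def[of "nwarrow v w"]
      cle_append_left cle_append_right L_def by auto
  have "interval2 v w y \<and> interval2 y x t \<longleftrightarrow> interval3 v w x t \<and> y = take L t"
  proof
    assume "interval2 v w y \<and> interval2 y x t"
    moreover from this have "length y = L"
      by (auto simp: interval2_def L_def dest: length_Nhat)
    ultimately show "interval3 v w x t \<and> y = take L t"
      unfolding I3 interval2_iff[of y] by (auto simp: interval2_def[of v w] L_def)
  next
    assume "interval3 v w x t \<and> y = take L t"
    moreover from this have "y \<in> Nhat L"
      unfolding I3 by (auto intro: take_Nhat)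
    moreover from this have "length y = L"
      by (rule length_Nhat)
    ultimately show "interval2 v w y \<and> interval2 y x t"
      unfolding I3 interval2_iff[of y] by (auto simp: interval2_def[of v w] L_def)
  qed
  then show ?thesis
    by (simp add: L_def)
qed

lemma interval2_interval2_right:
  assumes w: "\<forall>a\<in>set w. 1 \<le> a" and x: "\<forall>a\<in>set x. 1 \<le> a"
  shows "interval2 w x y \<and> interval2 v y t \<longleftrightarrow>
    interval3 v w x t \<and> y = map (untri (length v)) (drop (length v) t)"
proof -
  define p where "p = length v"
  define d where "d = drop p t"
  let ?A = "nearrow w x" and ?B = "nwarrow w x"
  have AB: "\<forall>a\<in>set ?A. 1 \<le> a" "\<forall>a\<in>set ?B. 1 \<le> a" "length ?A = length ?B"
    using nearrow_pos[OF w x] nwarrow_pos[OF w x] by (simp_all add: nearrow_def nwarrow_def)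
  have I3: "interval3 v w x t \<longleftrightarrow> t \<in> Nhat (p + (length w + length x)) \<and> take p t = v \<and>
      cle (map (tri p) ?A) d \<and> cle d (map (\<lambda>b. b + p) ?B)"
    unfolding interval3_def nearrow_nearrow[OF x] nwarrow_nwarrow cle_append_same p_def d_def
    by (simp add: add.assoc)
  have I2: "interval2 w x y \<longleftrightarrow> y \<in> Nhat (length w + length x) \<and> cle ?A y \<and> cle y ?B"
    by (simp add: interval2_def)
  have "interval2 w x y \<and> interval2 v y t \<longleftrightarrow>
    interval3 v w x t \<and> y = map (untri p) (drop p t)"
  proof
    assume "interval2 w x y \<and> interval2 v y t"
    then have y: "y \<in> Nhat (length w + length x)" "cle ?A y" "cle y ?B"
      and t: "t \<in> Nhat (p + length y)" "take p t = v"
        "cle (map (tri p) y) d" "cle d (map (\<lambda>a. a + p) y)"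
      unfolding I2 interval2_iff[of v] p_def d_def by blast+
    have "cle (map (tri p) ?A) d \<and> cle d (map (\<lambda>b. b + p) ?B) \<and> y = map (untri p) d"
      using cle_tri_untri_iff[OF AB, of p y d] y t Nhat_pos[OF y(1)] by blast
    then show "interval3 v w x t \<and> y = map (untri p) (drop p t)"
      unfolding I3 using t length_Nhat[OF y(1)] by (simp add: d_def)
  next
    assume "interval3 v w x t \<and> y = map (untri p) (drop p t)"
    then have t: "t \<in> Nhat (p + (length w + length x))" "take p t = v"
        "cle (map (tri p) ?A) d" "cle d (map (\<lambda>b. b + p) ?B)" and y_eq: "y = map (untri p) d"
      unfolding I3 d_def by blast+
    have y: "y \<in> Nhat (length w + length x)"
      using untri_drop_Nhat[OF t(1)] y_eq by (simp add: d_def)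
    have "cle (map (tri p) y) d \<and> cle d (map (\<lambda>a. a + p) y) \<and> cle ?A y \<and> cle y ?B"
      using cle_tri_untri_iff[OF AB, of p y d] t y_eq Nhat_pos[OF y] by blast
    then show "interval2 w x y \<and> interval2 v y t"
      unfolding I2 interval2_iff[of v] using y t length_Nhat[OF y] by (simp add: p_def d_def)
  qed
  then show ?thesis
    by (simp add: p_def)
qed

section \<open>The bilinear product\<close>

definition supp :: "(nat list \<Rightarrow> 'k::zero) \<Rightarrow> nat list set" where
  "supp f = {x. f x \<noteq> 0}"

lemma star_conv_supp: "star f g t = (\<Sum>v\<in>supp f. \<Sum>w\<in>supp g. f v * g w * starB v w t)"
  by (simp add: star_def supp_def)

lemma star_eq_sum_superset:
  assumes "finite A" "finite B" "supp f \<subseteq> A" "supp g \<subseteq> B"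
  shows "star f g t = (\<Sum>v\<in>A. \<Sum>w\<in>B. f v * g w * starB v w t)"
proof -
  have "star f g t = (\<Sum>v\<in>supp f. \<Sum>w\<in>B. f v * g w * starB v w t)"
    unfolding star_conv_supp using assms
    by (intro sum.cong refl sum.mono_neutral_left) (auto simp: supp_def)
  also have "\<dots> = (\<Sum>v\<in>A. \<Sum>w\<in>B. f v * g w * starB v w t)"
    using assms by (intro sum.mono_neutral_left) (auto simp: supp_def)
  finally show ?thesis .
qed

lemma supp_star_subset:
  fixes f g :: "nat list \<Rightarrow> 'k::comm_ring_1"
  shows "supp (star f g) \<subseteq> (\<Union>v\<in>supp f. \<Union>w\<in>supp g. supp (starB v w :: nat list \<Rightarrow> 'k))"
proof
  fix t
  assume "t \<in> supp (star f g)"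
  then have "(\<Sum>v\<in>supp f. \<Sum>w\<in>supp g. f v * g w * starB v w t) \<noteq> (0::'k)"
    by (simp add: supp_def star_conv_supp)
  then obtain v w where "v \<in> supp f" "w \<in> supp g" "(starB v w t :: 'k) \<noteq> 0"
    by (metis (no_types, lifting) mult_zero_right sum.neutral)
  then show "t \<in> (\<Union>v\<in>supp f. \<Union>w\<in>supp g. supp (starB v w :: nat list \<Rightarrow> 'k))"
    by (auto simp: supp_def)
qed

lemma finite_supp_starB: "finite (supp (starB v w :: nat list \<Rightarrow> 'k::{zero,one}))"
proof (rule finite_subset)
  show "supp (starB v w :: nat list \<Rightarrow> 'k) \<subseteq> {v, w} \<union> Nhat (length v + length w)"
    by (auto simp: supp_def starB_def basis_def split: if_splits)
qed (simp add: finite_Nhat)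

lemma star_star_left:
  fixes f g h :: "nat list \<Rightarrow> 'k::comm_ring_1"
  assumes "finite (supp f)" "finite (supp g)" "finite (supp h)"
  shows "star (star f g) h t = (\<Sum>v\<in>supp f. \<Sum>w\<in>supp g. \<Sum>x\<in>supp h.
    f v * g w * h x * (\<Sum>y\<in>supp (starB v w :: nat list \<Rightarrow> 'k). starB v w y * starB y x t))"
proof -
  define Y where "Y = (\<Union>v\<in>supp f. \<Union>w\<in>supp g. supp (starB v w :: nat list \<Rightarrow> 'k))"
  have Y: "finite Y" "supp (star f g) \<subseteq> Y"
    using assms finite_supp_starB supp_star_subset[of f g] by (auto simp: Y_def)
  have inner: "(\<Sum>y\<in>Y. (starB v w y :: 'k) * starB y x t) =
      (\<Sum>y\<in>supp (starB v w :: nat list \<Rightarrow> 'k). starB v w y * starB y x t)"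
    if "v \<in> supp f" "w \<in> supp g" for v w x
  proof (rule sum.mono_neutral_right)
    show "supp (starB v w :: nat list \<Rightarrow> 'k) \<subseteq> Y"
      using that unfolding Y_def by blast
  qed (use Y(1) in \<open>auto simp: supp_def\<close>)
  have "star (star f g) h t = (\<Sum>y\<in>Y. \<Sum>x\<in>supp h. star f g y * h x * starB y x t)"
    using Y assms by (intro star_eq_sum_superset) auto
  also have "\<dots> = (\<Sum>y\<in>Y. \<Sum>x\<in>supp h. \<Sum>v\<in>supp f. \<Sum>w\<in>supp g.
      f v * g w * h x * (starB v w y * starB y x t))"
    by (simp add: star_conv_supp sum_distrib_left sum_distrib_right mult_ac)
  also have "\<dots> = (\<Sum>v\<in>supp f. \<Sum>w\<in>supp g. \<Sum>x\<in>supp h. \<Sum>y\<in>Y.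
      f v * g w * h x * (starB v w y * starB y x t))"
    by (simp only: sum.swap[of _ Y]) (simp only: sum.swap[of _ "supp h"])
  also have "\<dots> = (\<Sum>v\<in>supp f. \<Sum>w\<in>supp g. \<Sum>x\<in>supp h.
      f v * g w * h x * (\<Sum>y\<in>Y. starB v w y * starB y x t))"
    by (simp add: sum_distrib_left)
  also have "\<dots> = (\<Sum>v\<in>supp f. \<Sum>w\<in>supp g. \<Sum>x\<in>supp h.
      f v * g w * h x * (\<Sum>y\<in>supp (starB v w :: nat list \<Rightarrow> 'k). starB v w y * starB y x t))"
    by (simp add: inner)
  finally show ?thesis .
qed

lemma star_star_right:
  fixes f g h :: "nat list \<Rightarrow> 'k::comm_ring_1"
  assumes "finite (supp f)" "finite (supp g)" "finite (supp h)"
  shows "star f (star g h) t = (\<Sum>v\<in>supp f. \<Sum>w\<in>supp g. \<Sum>x\<in>supp h.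
    f v * g w * h x * (\<Sum>z\<in>supp (starB w x :: nat list \<Rightarrow> 'k). starB w x z * starB v z t))"
proof -
  define Z where "Z = (\<Union>w\<in>supp g. \<Union>x\<in>supp h. supp (starB w x :: nat list \<Rightarrow> 'k))"
  have Z: "finite Z" "supp (star g h) \<subseteq> Z"
    using assms finite_supp_starB supp_star_subset[of g h] by (auto simp: Z_def)
  have inner: "(\<Sum>z\<in>Z. (starB w x z :: 'k) * starB v z t) =
      (\<Sum>z\<in>supp (starB w x :: nat list \<Rightarrow> 'k). starB w x z * starB v z t)"
    if "w \<in> supp g" "x \<in> supp h" for v w x
  proof (rule sum.mono_neutral_right)
    show "supp (starB w x :: nat list \<Rightarrow> 'k) \<subseteq> Z"
      using that unfolding Z_def by blast
  qed (use Z(1) in \<open>auto simp: supp_def\<close>)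
  have "star f (star g h) t = (\<Sum>v\<in>supp f. \<Sum>z\<in>Z. f v * star g h z * starB v z t)"
    using Z assms by (intro star_eq_sum_superset) auto
  also have "\<dots> = (\<Sum>v\<in>supp f. \<Sum>z\<in>Z. \<Sum>w\<in>supp g. \<Sum>x\<in>supp h.
      f v * g w * h x * (starB w x z * starB v z t))"
    by (simp add: star_conv_supp sum_distrib_left sum_distrib_right mult_ac)
  also have "\<dots> = (\<Sum>v\<in>supp f. \<Sum>w\<in>supp g. \<Sum>x\<in>supp h. \<Sum>z\<in>Z.
      f v * g w * h x * (starB w x z * starB v z t))"
    by (simp only: sum.swap[of _ Z])
  also have "\<dots> = (\<Sum>v\<in>supp f. \<Sum>w\<in>supp g. \<Sum>x\<in>supp h.
      f v * g w * h x * (\<Sum>z\<in>Z. starB w x z * starB v z t))"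
    by (simp add: sum_distrib_left)
  also have "\<dots> = (\<Sum>v\<in>supp f. \<Sum>w\<in>supp g. \<Sum>x\<in>supp h.
      f v * g w * h x * (\<Sum>z\<in>supp (starB w x :: nat list \<Rightarrow> 'k). starB w x z * starB v z t))"
    by (simp add: inner)
  finally show ?thesis .
qed

lemma starB_nonempty: "v \<noteq> [] \<Longrightarrow> w \<noteq> [] \<Longrightarrow> starB v w t = (if interval2 v w t then 1 else 0)"
  by (simp add: starB_def interval2_def)

lemma supp_starB:
  "v \<noteq> [] \<Longrightarrow> w \<noteq> [] \<Longrightarrow> supp (starB v w :: nat list \<Rightarrow> 'k::zero_neq_one) = Collect (interval2 v w)"
  by (auto simp: supp_def starB_nonempty)

lemma interval2_nonempty: "interval2 v w t \<Longrightarrow> v \<noteq> [] \<Longrightarrow> t \<noteq> []"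
  by (auto simp: interval2_def dest: length_Nhat)

lemma finite_interval2: "finite (Collect (interval2 v w))"
  by (rule finite_subset[OF _ finite_Nhat]) (auto simp: interval2_def)

lemma sum_indicator_unique:
  assumes "finite S" "\<And>y. y \<in> S \<Longrightarrow> P y \<longleftrightarrow> Q \<and> y = y0" "Q \<Longrightarrow> y0 \<in> S"
  shows "(\<Sum>y\<in>S. if P y then 1 else 0) = (if Q then 1 else (0::'a::semiring_1))"
proof -
  have "(\<Sum>y\<in>S. if P y then 1 else 0) = (\<Sum>y\<in>S. if y = y0 then (if Q then 1 else 0) else (0::'a))"
    using assms(2) by (intro sum.cong) auto
  also have "\<dots> = (if Q then 1 else 0)"
    using assms(1,3) by (simp add: sum.delta')
  finally show ?thesis .
qed

lemma sum_starB_starB_left: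
  assumes "v \<noteq> []" "w \<noteq> []" "x \<noteq> []"
  shows "(\<Sum>y\<in>supp (starB v w :: nat list \<Rightarrow> 'k::comm_ring_1). (starB v w y :: 'k) * starB y x t) =
    (if interval3 v w x t then 1 else 0)"
proof -
  have "(\<Sum>y\<in>supp (starB v w :: nat list \<Rightarrow> 'k). (starB v w y :: 'k) * starB y x t) =
      (\<Sum>y\<in>Collect (interval2 v w). if interval2 v w y \<and> interval2 y x t then 1 else 0)"
  proof (rule sum.cong)
    fix y
    assume "y \<in> Collect (interval2 v w)"
    moreover from this have "y \<noteq> []"
      using assms(1) interval2_nonempty by blast
    ultimately show "(starB v w y :: 'k) * starB y x t =
        (if interval2 v w y \<and> interval2 y x t then 1 else 0)"
      using assms by (simp add: starB_nonempty)
  qed (use assms in \<open>simp add: supp_starB\<close>)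
  also have "\<dots> = (if interval3 v w x t then 1 else 0)"
    using interval2_interval2_left finite_interval2 by (intro sum_indicator_unique) blast+
  finally show ?thesis .
qed

lemma sum_starB_starB_right:
  assumes "v \<noteq> []" "w \<noteq> []" "x \<noteq> []" "\<forall>a\<in>set w. 1 \<le> a" "\<forall>a\<in>set x. 1 \<le> a"
  shows "(\<Sum>z\<in>supp (starB w x :: nat list \<Rightarrow> 'k::comm_ring_1). (starB w x z :: 'k) * starB v z t) =
    (if interval3 v w x t then 1 else 0)"
proof -
  have "(\<Sum>z\<in>supp (starB w x :: nat list \<Rightarrow> 'k). (starB w x z :: 'k) * starB v z t) =
      (\<Sum>z\<in>Collect (interval2 w x). if interval2 w x z \<and> interval2 v z t then 1 else 0)"
  proof (rule sum.cong)
    fix z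
    assume "z \<in> Collect (interval2 w x)"
    moreover from this have "z \<noteq> []"
      using assms(2) interval2_nonempty by blast
    ultimately show "(starB w x z :: 'k) * starB v z t =
        (if interval2 w x z \<and> interval2 v z t then 1 else 0)"
      using assms by (simp add: starB_nonempty)
  qed (use assms in \<open>simp add: supp_starB\<close>)
  also have "\<dots> = (if interval3 v w x t then 1 else 0)"
    using interval2_interval2_right[OF assms(4,5)] finite_interval2
    by (intro sum_indicator_unique) blast+
  finally show ?thesis .
qed

lemma in_span_supp:
  assumes "in_span {1..} f" "v \<in> supp f"
  shows "v \<noteq> []" "\<forall>a\<in>set v. 1 \<le> a"
proof -
  obtain n where "1 \<le> n" "v \<in> Nhat n"
    using assms by (auto simp: in_span_def supp_def)
  then show "v \<noteq> []" "\<forall>a\<in>set v. 1 \<le> a"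
    using length_Nhat Nhat_pos by fastforce+
qed

lemma star_assoc:
  fixes f g h :: "nat list \<Rightarrow> 'k::comm_ring_1"
  assumes f: "in_span {1..} f" and g: "in_span {1..} g" and h: "in_span {1..} h"
  shows "star (star f g) h = star f (star g h)"
proof
  fix t
  have fin: "finite (supp f)" "finite (supp g)" "finite (supp h)"
    using assms by (simp_all add: in_span_def supp_def)
  have coeff: "(\<Sum>y\<in>supp (starB v w :: nat list \<Rightarrow> 'k). (starB v w y :: 'k) * starB y x t) =
      (\<Sum>z\<in>supp (starB w x :: nat list \<Rightarrow> 'k). (starB w x z :: 'k) * starB v z t)"
    if "v \<in> supp f" "w \<in> supp g" "x \<in> supp h" for v w x
    using in_span_supp[OF f that(1)] in_span_supp[OF g that(2)] in_span_supp[OF h that(3)]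
    by (simp add: sum_starB_starB_left sum_starB_starB_right)
  show "star (star f g) h t = star f (star g h) t"
    unfolding star_star_left[OF fin] star_star_right[OF fin] by (simp add: coeff)
qed

lemma basis_apply: "basis u t = (if t = u then 1 else 0)"
  by (simp add: basis_def)

lemma supp_basis: "supp (basis u :: nat list \<Rightarrow> 'k::zero_neq_one) = {u}"
  by (auto simp: supp_def basis_def)

lemma star_star_basis:
  assumes "u \<noteq> []" "v \<noteq> []" "w \<noteq> []"
  shows "star (star (basis u) (basis v)) (basis w) =
    (\<lambda>t. if interval3 u v w t then 1 else (0::'k::comm_ring_1))"
proof
  fix t
  have "star (star (basis u) (basis v)) (basis w) t =
      (\<Sum>y\<in>supp (starB u v :: nat list \<Rightarrow> 'k). (starB u v y :: 'k) * starB y w t)"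
    using star_star_left[of "basis u" "basis v" "basis w" t] by (simp add: supp_basis basis_apply)
  also have "\<dots> = (if interval3 u v w t then 1 else 0)"
    by (rule sum_starB_starB_left[OF assms])
  finally show "star (star (basis u) (basis v)) (basis w) t = (if interval3 u v w t then 1 else (0::'k))" .
qed

lemma starB_Nil_left: "starB [] w = basis w"
  by (simp add: starB_def)

lemma starB_Nil_right: "starB v [] = basis v"
  by (simp add: starB_def)

lemma star_basis_Nil_left:
  assumes "finite (supp f)"
  shows "star (basis []) f = f"
proof
  fix t
  have "star (basis []) f t = (\<Sum>w\<in>supp f. f w * (if t = w then 1 else 0))"
    by (simp add: star_conv_supp supp_basis basis_apply starB_Nil_left starB_Nil_right)
  also have "\<dots> = (\<Sum>w\<in>supp f. if t = w then f w else 0)"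
    by (intro sum.cong) auto
  also have "\<dots> = f t"
    using assms by (simp add: sum.delta') (simp add: supp_def)
  finally show "star (basis []) f t = f t" .
qed

lemma star_basis_Nil_right:
  assumes "finite (supp f)"
  shows "star f (basis []) = f"
proof
  fix t
  have "star f (basis []) t = (\<Sum>v\<in>supp f. f v * (if t = v then 1 else 0))"
    by (simp add: star_conv_supp supp_basis basis_apply starB_Nil_left starB_Nil_right)
  also have "\<dots> = (\<Sum>v\<in>supp f. if t = v then f v else 0)"
    by (intro sum.cong) auto
  also have "\<dots> = f t"
    using assms by (simp add: sum.delta') (simp add: supp_def)
  finally show "star f (basis []) t = f t" .
qed

theorem mainTheorem10:
  shows "(\<forall>f g h :: nat list \<Rightarrow> 'k::field_char_0.
            in_span {1..} f \<and> in_span {1..} g \<and> in_span {1..} h \<longrightarrow>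
            star (star f g) h = star f (star g h))
       \<and> (\<forall>p n m u v w. 1 \<le> p \<and> 1 \<le> n \<and> 1 \<le> m \<and>
            u \<in> Nhat p \<and> v \<in> Nhat n \<and> w \<in> Nhat m \<longrightarrow>
            star (star (basis u) (basis v)) (basis w) =
              (\<lambda>t. if t \<in> Nhat (p + n + m) \<and> cle (nearrow (nearrow u v) w) t
                        \<and> cle t (nwarrow (nwarrow u v) w) then 1 else (0::'k)))
       \<and> (\<forall>f :: nat list \<Rightarrow> 'k. in_span UNIV f \<longrightarrow>
            star (basis []) f = f \<and> star f (basis []) = f)"
proof (intro conjI allI impI)
  fix f g h :: "nat list \<Rightarrow> 'k"
  assume "in_span {1..} f \<and> in_span {1..} g \<and> in_span {1..} h"
  then show "star (star f g) h = star f (star g h)"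
    by (intro star_assoc) auto
next
  fix p n m u v w
  assume "1 \<le> p \<and> 1 \<le> n \<and> 1 \<le> m \<and> u \<in> Nhat p \<and> v \<in> Nhat n \<and> w \<in> Nhat m"
  then have "length u = p" "length v = n" "length w = m" "u \<noteq> []" "v \<noteq> []" "w \<noteq> []"
    using length_Nhat by fastforce+
  then show "star (star (basis u) (basis v)) (basis w) =
      (\<lambda>t. if t \<in> Nhat (p + n + m) \<and> cle (nearrow (nearrow u v) w) t
                \<and> cle t (nwarrow (nwarrow u v) w) then 1 else (0::'k))"
    using star_star_basis[of u v w] by (simp add: interval3_def)
next
  fix f :: "nat list \<Rightarrow> 'k"
  assume "in_span UNIV f"
  then have "finite (supp f)"
    by (simp add: in_span_def supp_def)
  then show "star (basis []) f = f" "star f (basis []) = f"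
    by (simp_all add: star_basis_Nil_left star_basis_Nil_right)
qed

end
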